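(* Let $H$ be a planar graph and let $C_1,C_2$ be two different simple cycles in $H$ such that one of them has length $5$ and the other has length at most $5$. If $H$ does not contain any removable cycle of length at most $10$, then $C_1$ and $C_2$ are edge-disjoint.
   Context: A simple cycle in a graph $H$ is a sequence $(v_1,\dots,v_k)$ of $k>2$ distinct vertices with consecutive vertices adjacent and $v_k$ adjacent to $v_1$; $V(C)$, $E(C)$ are its vertex and edge sets and its length is $|V(C)|$. Two cycles are different if their edge sets differ. A simple cycle $C$ in $H$ is removable if the induced subgraph $H[V(C)]$ is neither isomorphic to a complete graph nor to a cycle graph of odd length. *)

theory Defs
  imports "HOL-Analysis.Analysis"
begin

definition simple_graph :: "'a set \<Rightarrow> 'a set set \<Rightarrow> bool" where
  "simple_graph V E \<longleftrightarrow> finite V \<and>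
     (\<forall>e\<in>E. \<exists>u v. e = {u, v} \<and> u \<noteq> v \<and> u \<in> V \<and> v \<in> V)"

definition planar :: "'a set \<Rightarrow> 'a set set \<Rightarrow> bool" where
  "planar V E \<longleftrightarrow> (\<exists>(pos :: 'a \<Rightarrow> complex) (\<gamma> :: 'a set \<Rightarrow> real \<Rightarrow> complex).
     inj_on pos V \<and>
     (\<forall>e\<in>E. arc (\<gamma> e) \<and> {pathstart (\<gamma> e), pathfinish (\<gamma> e)} = pos ` e) \<and>
     (\<forall>e\<in>E. \<forall>e'\<in>E. e \<noteq> e' \<longrightarrow>
         path_image (\<gamma> e) \<inter> path_image (\<gamma> e') \<subseteq> pos ` (e \<inter> e')) \<and>
     (\<forall>e\<in>E. \<forall>v\<in>V. v \<notin> e \<longrightarrow> pos v \<notin> path_image (\<gamma> e)))"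

definition simple_cycle :: "'a set set \<Rightarrow> 'a list \<Rightarrow> bool" where
  "simple_cycle E cs \<longleftrightarrow> length cs > 2 \<and> distinct cs \<and>
     (\<forall>i < length cs. {cs ! i, cs ! ((i + 1) mod length cs)} \<in> E)"

definition cycle_edges :: "'a list \<Rightarrow> 'a set set" where
  "cycle_edges cs = {{cs ! i, cs ! ((i + 1) mod length cs)} | i. i < length cs}"

definition induced_edges :: "'a set set \<Rightarrow> 'a set \<Rightarrow> 'a set set" where
  "induced_edges E S = {e \<in> E. e \<subseteq> S}"

definition graph_iso :: "'a set \<Rightarrow> 'a set set \<Rightarrow> 'b set \<Rightarrow> 'b set set \<Rightarrow> bool" where
  "graph_iso V1 E1 V2 E2 \<longleftrightarrow> (\<exists>f. bij_betw f V1 V2 \<and>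
     (\<forall>u\<in>V1. \<forall>v\<in>V1. {u, v} \<in> E1 \<longleftrightarrow> {f u, f v} \<in> E2))"

definition complete_graph_edges :: "nat \<Rightarrow> nat set set" where
  "complete_graph_edges n = {{i, j} | i j. i < n \<and> j < n \<and> i \<noteq> j}"

definition cycle_graph_edges :: "nat \<Rightarrow> nat set set" where
  "cycle_graph_edges n = {{i, (i + 1) mod n} | i. i < n}"

definition is_complete_graph :: "'a set \<Rightarrow> 'a set set \<Rightarrow> bool" where
  "is_complete_graph V E \<longleftrightarrow> (\<exists>n. graph_iso V E {0..<n} (complete_graph_edges n))"

definition is_odd_cycle_graph :: "'a set \<Rightarrow> 'a set set \<Rightarrow> bool" where
  "is_odd_cycle_graph V E \<longleftrightarrow>
     (\<exists>n. n \<ge> 3 \<and> odd n \<and> graph_iso V E {0..<n} (cycle_graph_edges n))"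

definition removable :: "'a set set \<Rightarrow> 'a list \<Rightarrow> bool" where
  "removable E cs \<longleftrightarrow> simple_cycle E cs \<and>
     \<not> is_complete_graph (set cs) (induced_edges E (set cs)) \<and>
     \<not> is_odd_cycle_graph (set cs) (induced_edges E (set cs))"

end

theory Submission
  imports Defs
begin

text \<open>Since no cycle of length at most 10 is removable, every even cycle of that length
  induces a complete graph, while planarity excludes \<open>K\<^sub>5\<close> (by the Jordan curve
  theorem, two interlacing chords of a pentagon on the same side of it must cross).
  Consequently every 4-cycle has both diagonals, there are no 6- or 8-cycles, and no
  5-cycle has a chord. If a 5-cycle shared an edge with a different cycle of length at
  most 5, following the second cycle around from the common edge would always produce
  a chord of the 5-cycle or a cycle of length 6 or 8.\<close>

lemma connected_subset_Un_open_disjoint: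
  assumes "connected S" "S \<subseteq> A \<union> B" "open A" "open B" "A \<inter> B = {}"
  shows "S \<subseteq> A \<or> S \<subseteq> B"
  using connectedD[OF assms(1,3,4)] assms(2,5) by blast

lemma connected_inside_or_outside:
  fixes S T :: "'a::real_normed_vector set"
  assumes "connected S" "closed T" "S \<inter> T = {}"
  shows "S \<subseteq> inside T \<or> S \<subseteq> outside T"
proof -
  have "S \<subseteq> inside T \<union> outside T"
    using assms(3) inside_Un_outside by blast
  then show ?thesis
    using connected_subset_Un_open_disjoint[OF assms(1) _ open_inside open_outside] assms(2)
    by simp
qed

lemma arc_ends_in_closure:
  assumes "arc d" and "path_image d - {pathstart d, pathfinish d} \<subseteq> S"
  shows "pathstart d \<in> closure S" and "pathfinish d \<in> closure S"
proof -
  have inj: "inj_on d {0..1}" and cont: "continuous_on {0..1} d"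
    using assms(1) by (auto simp: arc_def path_def)
  have "d ` {0<..<1} \<subseteq> path_image d - {pathstart d, pathfinish d}"
    using inj by (auto simp: path_image_def pathstart_def pathfinish_def dest: inj_onD)
  then have "d ` {0<..<1} \<subseteq> closure S"
    using assms(2) closure_subset by blast
  then have "d ` closure {0<..<1} \<subseteq> closure S"
    by (intro image_closure_subset) (auto simp: cont)
  then show "pathstart d \<in> closure S" "pathfinish d \<in> closure S"
    by (auto simp: pathstart_def pathfinish_def)
qed

lemma Jordan_two_arcs:
  fixes p q :: "real \<Rightarrow> complex"
  assumes "arc p" "arc q" "pathstart p = a" "pathfinish p = b"
    "pathstart q = a" "pathfinish q = b" "path_image p \<inter> path_image q = {a,b}"
  shows "closed (path_image p \<union> path_image q)"
    and "connected (inside (path_image p \<union> path_image q))"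
    and "connected (outside (path_image p \<union> path_image q))"
    and "inside (path_image p \<union> path_image q) \<noteq> {}"
    and "bounded (inside (path_image p \<union> path_image q))"
    and "frontier (inside (path_image p \<union> path_image q)) = path_image p \<union> path_image q"
proof -
  have loop: "simple_path (p +++ reversepath q)"
    using assms by (auto simp: simple_path_join_loop_eq arc_simple_path simple_path_reversepath)
  have "path_image (p +++ reversepath q) = path_image p \<union> path_image q"
    using assms by (simp add: path_image_join)
  moreover have "pathfinish (p +++ reversepath q) = pathstart (p +++ reversepath q)"
    using assms by simp
  ultimately show "connected (inside (path_image p \<union> path_image q))"
    and "connected (outside (path_image p \<union> path_image q))"
    and "inside (path_image p \<union> path_image q) \<noteq> {}"
    and "bounded (inside (path_image p \<union> path_image q))"
    and "frontier (inside (path_image p \<union> path_image q)) = path_image p \<union> path_image q"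
    using Jordan_inside_outside[OF loop] by auto
  show "closed (path_image p \<union> path_image q)"
    using assms by (intro closed_Un closed_arc_image)
qed

locale theta_graph =
  fixes a b :: complex and p q r :: "real \<Rightarrow> complex"
  assumes arcs: "arc p" "arc q" "arc r"
    and starts: "pathstart p = a" "pathstart q = a" "pathstart r = a"
    and finishes: "pathfinish p = b" "pathfinish q = b" "pathfinish r = b"
    and meet_pq: "path_image p \<inter> path_image q = {a,b}"
    and meet_pr: "path_image p \<inter> path_image r = {a,b}"
    and meet_qr: "path_image q \<inter> path_image r = {a,b}"
begin

lemma swap_pq: "theta_graph a b q p r"
  using arcs starts finishes meet_pq meet_pr meet_qr
  by unfold_locales (auto simp: Int_commute)

lemma swap_qr: "theta_graph a b p r q"
  using arcs starts finishes meet_pq meet_pr meet_qr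
  by unfold_locales (auto simp: Int_commute)

lemma ends_on_p: "a \<in> path_image p" "b \<in> path_image p"
  using pathstart_in_path_image[of p] pathfinish_in_path_image[of p] starts finishes by simp_all

lemma ends_distinct: "a \<noteq> b"
  using arc_distinct_ends[OF arcs(1)] starts finishes by simp

lemmas Jordan_pq = Jordan_two_arcs[OF arcs(1,2) starts(1) finishes(1) starts(2) finishes(2) meet_pq]
lemmas Jordan_pr = Jordan_two_arcs[OF arcs(1,3) starts(1) finishes(1) starts(3) finishes(3) meet_pr]
lemmas Jordan_qr = Jordan_two_arcs[OF arcs(2,3) starts(2) finishes(2) starts(3) finishes(3) meet_qr]

lemma split_inside:
  assumes "path_image r \<inter> inside (path_image p \<union> path_image q) \<noteq> {}"
  obtains "inside (path_image p \<union> path_image r) \<inter> inside (path_image q \<union> path_image r) = {}"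
    and "inside (path_image p \<union> path_image r) \<union> inside (path_image q \<union> path_image r)
           \<union> (path_image r - {a,b}) = inside (path_image p \<union> path_image q)"
  using split_inside_simple_closed_curve[OF arc_imp_simple_path[OF arcs(1)] starts(1) finishes(1)
      arc_imp_simple_path[OF arcs(2)] starts(2) finishes(2) arc_imp_simple_path[OF arcs(3)] starts(3)
      finishes(3) ends_distinct meet_pq meet_pr meet_qr assms] .

lemma insides_disjoint:
  assumes r_out: "path_image r \<inter> inside (path_image p \<union> path_image q) = {}"
    and q_out: "path_image q \<inter> inside (path_image p \<union> path_image r) = {}"
  shows "inside (path_image p \<union> path_image q) \<inter> inside (path_image p \<union> path_image r) = {}"
proof -
  let ?Ipq = "inside (path_image p \<union> path_image q)"
  let ?Ipr = "inside (path_image p \<union> path_image r)"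
  have "?Ipq \<inter> (path_image p \<union> path_image r) = {}"
    using r_out inside_no_overlap[of "path_image p \<union> path_image q"] by blast
  then have "?Ipq \<subseteq> ?Ipr \<or> ?Ipq \<subseteq> outside (path_image p \<union> path_image r)"
    by (rule connected_inside_or_outside[OF Jordan_pq(2) Jordan_pr(1)])
  moreover have "\<not> ?Ipq \<subseteq> ?Ipr"
  proof
    assume sub: "?Ipq \<subseteq> ?Ipr"
    obtain z where z: "z \<in> path_image q" "z \<notin> {a,b}"
      using nonempty_simple_path_endless[OF arc_imp_simple_path[OF arcs(2)]] starts finishes by auto
    have "z \<in> closure ?Ipq"
      using Jordan_pq(6) z frontier_def by blast
    also have "\<dots> \<subseteq> closure ?Ipr"
      using sub by (rule closure_mono)
    also have "\<dots> \<subseteq> path_image p \<union> path_image r \<union> ?Ipr"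
      using closure_inside_subset[OF Jordan_pr(1)] .
    finally show False
      using z q_out meet_pq meet_qr by blast
  qed
  ultimately show ?thesis
    using inside_Int_outside by blast
qed

text \<open>Otherwise the three insides are pairwise disjoint, and the closed insides of
  \<open>p \<union> q\<close> and \<open>p \<union> r\<close> meet exactly in \<open>p\<close>. By Janiszewski's theorem the
  complement of their union is connected; it contains the inside of \<open>q \<union> r\<close>, hence
  lies in it, yet it is unbounded.\<close>
lemma some_arc_inside:
  "path_image r \<inter> inside (path_image p \<union> path_image q) \<noteq> {} \<or>
   path_image q \<inter> inside (path_image p \<union> path_image r) \<noteq> {} \<or>
   path_image p \<inter> inside (path_image q \<union> path_image r) \<noteq> {}"
proof (rule ccontr)
  let ?P = "path_image p" and ?Q = "path_image q" and ?R = "path_image r"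
  let ?Ipq = "inside (?P \<union> ?Q)" and ?Ipr = "inside (?P \<union> ?R)" and ?Iqr = "inside (?Q \<union> ?R)"
  assume "\<not> ?thesis"
  then have r_out: "?R \<inter> ?Ipq = {}" and q_out: "?Q \<inter> ?Ipr = {}" and p_out: "?P \<inter> ?Iqr = {}"
    by auto
  have pq_pr: "?Ipq \<inter> ?Ipr = {}"
    using insides_disjoint[OF r_out q_out] .
  have pq_qr: "?Ipq \<inter> ?Iqr = {}"
    using theta_graph.insides_disjoint[OF swap_pq] r_out p_out by (simp add: Un_commute)
  have pr_qr: "?Ipr \<inter> ?Iqr = {}"
    using theta_graph.insides_disjoint[OF theta_graph.swap_pq[OF swap_qr]] q_out p_out
    by (simp add: Un_commute Int_commute)
  define S where "S = closure ?Ipq"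
  define T where "T = closure ?Ipr"
  have S: "S = ?Ipq \<union> ?P \<union> ?Q"
    unfolding S_def using closure_Un_frontier Jordan_pq(6) by auto
  have T: "T = ?Ipr \<union> ?P \<union> ?R"
    unfolding T_def using closure_Un_frontier Jordan_pr(6) by auto
  have "S \<inter> T = ?P"
  proof (intro equalityI subsetI)
    fix z assume "z \<in> S \<inter> T"
    then have "z \<in> ?Ipq \<or> z \<in> ?P \<or> z \<in> ?Q" "z \<in> ?Ipr \<or> z \<in> ?P \<or> z \<in> ?R"
      unfolding S T by auto
    then show "z \<in> ?P"
      using pq_pr r_out q_out meet_qr ends_on_p by auto
  qed (auto simp: S T)
  then have "connected (S \<inter> T)"
    using arcs(1) by (simp add: arc_imp_path connected_path_image)
  moreover have "compact S" "closed T"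
    unfolding S_def T_def using Jordan_pq(5) by simp_all
  moreover have "connected (- S)" "connected (- T)"
    unfolding S T using Jordan_pq(3) Jordan_pr(3) by (simp_all add: outside_inside Un_ac)
  ultimately have conn: "connected (- (S \<union> T))"
    using Janiszewski_connected by blast
  have "?Iqr \<subseteq> - (S \<union> T)"
    unfolding S T using pq_qr pr_qr p_out inside_no_overlap[of "?Q \<union> ?R"] by blast
  have "- (S \<union> T) \<inter> (?Q \<union> ?R) = {}"
    unfolding S T by blast
  then have "- (S \<union> T) \<subseteq> ?Iqr \<or> - (S \<union> T) \<subseteq> outside (?Q \<union> ?R)"
    by (rule connected_inside_or_outside[OF conn Jordan_qr(1)])
  moreover have "bounded (S \<union> T)"
    unfolding S_def T_def using Jordan_pq(5) Jordan_pr(5) by (simp add: bounded_closure)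
  ultimately show False
    using \<open>?Iqr \<subseteq> - (S \<union> T)\<close> Jordan_qr(4,5) inside_Int_outside
      cobounded_imp_unbounded bounded_subset by blast
qed

end

text \<open>\<open>r\<close> and \<open>d\<close> are chords of the Jordan curve \<open>p \<union> q\<close> with interlacing ends.\<close>
locale theta_crossing = theta_graph +
  fixes d :: "real \<Rightarrow> complex" and x y :: complex
  assumes arc_d: "arc d" and start_d: "pathstart d = x" and finish_d: "pathfinish d = y"
    and x_on_p: "x \<in> path_image p - {a,b}" and y_on_q: "y \<in> path_image q - {a,b}"
    and d_meet_pq: "path_image d \<inter> (path_image p \<union> path_image q) \<subseteq> {x,y}"
    and d_avoids_r: "path_image d \<inter> path_image r = {}"
begin

lemma swap: "theta_crossing a b q p r (reversepath d) y x"
proof -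
  interpret qpr: theta_graph a b q p r by (rule swap_pq)
  show ?thesis
    using arc_d start_d finish_d x_on_p y_on_q d_meet_pq d_avoids_r
    by unfold_locales (auto simp: arc_reversepath)
qed

lemma connected_d_endless: "connected (path_image d - {x,y})"
  using connected_simple_path_endless[OF arc_imp_simple_path[OF arc_d]] start_d finish_d by simp

lemmas ends_d_in_closure = arc_ends_in_closure[OF arc_d, unfolded start_d finish_d]

lemma not_both_inside:
  assumes r_in: "path_image r - {a,b} \<subseteq> inside (path_image p \<union> path_image q)"
    and d_in: "path_image d - {x,y} \<subseteq> inside (path_image p \<union> path_image q)"
  shows False
proof -
  let ?P = "path_image p" and ?Q = "path_image q" and ?R = "path_image r"
  let ?Ipr = "inside (?P \<union> ?R)" and ?Iqr = "inside (?Q \<union> ?R)" and ?D = "path_image d - {x,y}"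
  have "?R \<inter> inside (?P \<union> ?Q) \<noteq> {}"
    using r_in nonempty_simple_path_endless[OF arc_imp_simple_path[OF arcs(3)]] starts finishes
    by auto
  then obtain disj: "?Ipr \<inter> ?Iqr = {}"
    and split: "?Ipr \<union> ?Iqr \<union> (?R - {a,b}) = inside (?P \<union> ?Q)"
    by (rule split_inside)
  have "?D \<subseteq> ?Ipr \<union> ?Iqr"
    using split d_in d_avoids_r by blast
  then have "?D \<subseteq> ?Ipr \<or> ?D \<subseteq> ?Iqr"
    using connected_subset_Un_open_disjoint[OF connected_d_endless _ _ _ disj]
      open_inside[OF Jordan_pr(1)] open_inside[OF Jordan_qr(1)] by blast
  then show False
  proof
    assume "?D \<subseteq> ?Ipr"
    then have "y \<in> ?P \<union> ?R \<union> ?Ipr"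
      using ends_d_in_closure(2) closure_inside_subset[OF Jordan_pr(1)] by blast
    then have "y \<in> inside (?P \<union> ?Q)"
      using y_on_q meet_pq meet_qr split by blast
    then show False
      using y_on_q inside_no_overlap by blast
  next
    assume "?D \<subseteq> ?Iqr"
    then have "x \<in> ?Q \<union> ?R \<union> ?Iqr"
      using ends_d_in_closure(1) closure_inside_subset[OF Jordan_qr(1)] by blast
    then have "x \<in> inside (?P \<union> ?Q)"
      using x_on_p meet_pq meet_pr split by blast
    then show False
      using x_on_p inside_no_overlap by blast
  qed
qed

lemma not_outside_if_q_inside_pr:
  assumes q_in: "path_image q \<inter> inside (path_image p \<union> path_image r) \<noteq> {}"
    and d_out: "path_image d - {x,y} \<subseteq> outside (path_image p \<union> path_image q)"
  shows False
proof -
  let ?P = "path_image p" and ?Q = "path_image q" and ?R = "path_image r"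
  let ?Ipr = "inside (?P \<union> ?R)" and ?Irq = "inside (?R \<union> ?Q)" and ?D = "path_image d - {x,y}"
  interpret prq: theta_graph a b p r q by (rule swap_qr)
  obtain split: "inside (?P \<union> ?Q) \<union> ?Irq \<union> (?Q - {a,b}) = ?Ipr"
    using prq.split_inside q_in by blast
  have "?D \<inter> (?P \<union> ?R) = {}"
    using d_meet_pq d_avoids_r by blast
  then have "?D \<subseteq> ?Ipr \<or> ?D \<subseteq> outside (?P \<union> ?R)"
    by (rule connected_inside_or_outside[OF connected_d_endless Jordan_pr(1)])
  moreover have "?Ipr \<inter> ?D \<noteq> {}"
  proof -
    have "y \<in> ?Ipr \<inter> closure ?D"
      using split y_on_q ends_d_in_closure(2) by blast
    then show ?thesis
      using open_Int_closure_eq_empty[OF open_inside[OF Jordan_pr(1)]] by blast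
  qed
  ultimately have "?D \<subseteq> ?Ipr"
    using inside_Int_outside by blast
  moreover have "?D \<inter> inside (?P \<union> ?Q) = {}" "?D \<inter> ?Q = {}"
    using d_out inside_Int_outside d_meet_pq by blast+
  ultimately have "?D \<subseteq> ?Irq"
    using split by blast
  then have "x \<in> ?R \<union> ?Q \<union> ?Irq"
    using ends_d_in_closure(1) closure_inside_subset[OF prq.Jordan_qr(1)] by blast
  then have "x \<in> ?Ipr"
    using x_on_p meet_pq meet_pr split by blast
  then show False
    using x_on_p inside_no_overlap by blast
qed

lemma not_both_outside:
  assumes r_out: "path_image r - {a,b} \<subseteq> outside (path_image p \<union> path_image q)"
    and d_out: "path_image d - {x,y} \<subseteq> outside (path_image p \<union> path_image q)"
  shows False
proof -
  let ?P = "path_image p" and ?Q = "path_image q" and ?R = "path_image r"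
  have "?R \<inter> inside (?P \<union> ?Q) = {}"
    using r_out ends_on_p inside_Int_outside inside_no_overlap by blast
  then consider "?Q \<inter> inside (?P \<union> ?R) \<noteq> {}" | "?P \<inter> inside (?Q \<union> ?R) \<noteq> {}"
    using some_arc_inside by blast
  then show False
  proof cases
    case 1
    then show False
      using not_outside_if_q_inside_pr d_out by blast
  next
    case 2
    then show False
      using theta_crossing.not_outside_if_q_inside_pr[OF swap] d_out
      by (simp add: Un_commute insert_commute)
  qed
qed

lemma not_same_side:
  assumes "S = inside (path_image p \<union> path_image q) \<or> S = outside (path_image p \<union> path_image q)"
    and "path_image r - {a,b} \<subseteq> S" and "path_image d - {x,y} \<subseteq> S"
  shows False
  using assms not_both_inside not_both_outside by blast

end

locale complete_graph_drawing =
  fixes K :: "'v set" and pos :: "'v \<Rightarrow> complex" and g :: "'v \<Rightarrow> 'v \<Rightarrow> real \<Rightarrow> complex"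
  assumes inj_pos: "inj_on pos K"
    and edge_arc: "\<And>x y. x \<in> K \<Longrightarrow> y \<in> K \<Longrightarrow> x \<noteq> y \<Longrightarrow> arc (g x y)"
    and edge_start: "\<And>x y. x \<in> K \<Longrightarrow> y \<in> K \<Longrightarrow> x \<noteq> y \<Longrightarrow> pathstart (g x y) = pos x"
    and edge_finish: "\<And>x y. x \<in> K \<Longrightarrow> y \<in> K \<Longrightarrow> x \<noteq> y \<Longrightarrow> pathfinish (g x y) = pos y"
    and edge_image_commute: "\<And>x y. x \<in> K \<Longrightarrow> y \<in> K \<Longrightarrow> path_image (g x y) = path_image (g y x)"
    and edges_meet: "\<And>x y u v. x \<in> K \<Longrightarrow> y \<in> K \<Longrightarrow> u \<in> K \<Longrightarrow> v \<in> K \<Longrightarrow> x \<noteq> y \<Longrightarrow> u \<noteq> v \<Longrightarrow>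
        {x,y} \<noteq> {u,v} \<Longrightarrow> path_image (g x y) \<inter> path_image (g u v) \<subseteq> pos ` ({x,y} \<inter> {u,v})"
begin

lemma ends_in_edge_image:
  assumes "x \<in> K" "y \<in> K" "x \<noteq> y"
  shows "pos x \<in> path_image (g x y)" and "pos y \<in> path_image (g x y)"
  using assms pathstart_in_path_image[of "g x y"] pathfinish_in_path_image[of "g x y"]
  by (simp_all add: edge_start edge_finish)

lemma edges_Int:
  assumes "x \<in> K" "y \<in> K" "u \<in> K" "v \<in> K" "x \<noteq> y" "u \<noteq> v" "{x,y} \<noteq> {u,v}"
  shows "path_image (g x y) \<inter> path_image (g u v) = pos ` ({x,y} \<inter> {u,v})"
proof
  have "pos x \<in> path_image (g x y)" "pos y \<in> path_image (g x y)"
    "pos u \<in> path_image (g u v)" "pos v \<in> path_image (g u v)"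
    using assms ends_in_edge_image by auto
  then show "pos ` ({x,y} \<inter> {u,v}) \<subseteq> path_image (g x y) \<inter> path_image (g u v)"
    by auto
qed (rule edges_meet[OF assms])

definition edge_interior :: "'v \<Rightarrow> 'v \<Rightarrow> complex set" where
  "edge_interior x y = path_image (g x y) - {pos x, pos y}"

definition pentagon :: "'v \<Rightarrow> 'v \<Rightarrow> 'v \<Rightarrow> 'v \<Rightarrow> 'v \<Rightarrow> complex set" where
  "pentagon v1 v2 v3 v4 v5 = path_image (g v1 v2) \<union> path_image (g v2 v3) \<union> path_image (g v3 v4)
     \<union> path_image (g v4 v5) \<union> path_image (g v5 v1)"

lemma edge_interior_Int:
  assumes "x \<in> K" "y \<in> K" "u \<in> K" "v \<in> K" "x \<noteq> y" "u \<noteq> v" "{x,y} \<noteq> {u,v}"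
  shows "edge_interior x y \<inter> path_image (g u v) = {}"
  using edges_meet[OF assms] unfolding edge_interior_def by blast

lemma edge_interior_inside_or_outside:
  assumes "x \<in> K" "y \<in> K" "x \<noteq> y" "closed T" "edge_interior x y \<inter> T = {}"
  shows "edge_interior x y \<subseteq> inside T \<or> edge_interior x y \<subseteq> outside T"
proof (rule connected_inside_or_outside[OF _ assms(4,5)])
  show "connected (edge_interior x y)"
    using connected_simple_path_endless[OF arc_imp_simple_path[OF edge_arc[OF assms(1-3)]]]
    unfolding edge_interior_def by (simp add: edge_start edge_finish assms)
qed

lemma pentagon_rotate: "pentagon v2 v3 v4 v5 v1 = pentagon v1 v2 v3 v4 v5"
  unfolding pentagon_def by (simp add: Un_ac)

text \<open>The paths \<open>v\<^sub>1 v\<^sub>2 v\<^sub>3\<close> and \<open>v\<^sub>1 v\<^sub>5 v\<^sub>4 v\<^sub>3\<close> together with the chord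
  \<open>v\<^sub>1 v\<^sub>3\<close> form a theta graph, crossed by the chord \<open>v\<^sub>2 v\<^sub>4\<close>.\<close>
lemma crossing_chords_not_same_side:
  assumes dist: "distinct [v1,v2,v3,v4,v5]" and K: "{v1,v2,v3,v4,v5} \<subseteq> K"
    and S: "S = inside (pentagon v1 v2 v3 v4 v5) \<or> S = outside (pentagon v1 v2 v3 v4 v5)"
    and chords: "edge_interior v1 v3 \<subseteq> S" "edge_interior v2 v4 \<subseteq> S"
  shows False
proof -
  have inK: "v1 \<in> K" "v2 \<in> K" "v3 \<in> K" "v4 \<in> K" "v5 \<in> K"
    using K by auto
  have dist_rev: "distinct [v5,v4,v3,v2,v1]"
    using dist by auto
  note vs = inK dist dist_rev
  note edge = edge_arc edge_start edge_finish
  have meet: "path_image (g x y) \<inter> path_image (g u v) = pos ` ({x,y} \<inter> {u,v})"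
    if "x \<in> K" "y \<in> K" "u \<in> K" "v \<in> K" "x \<noteq> y" "u \<noteq> v" "\<not> (x = u \<and> y = v \<or> x = v \<and> y = u)"
    for x y u v
    using edges_Int that by (simp add: doubleton_eq_iff)
  define p where "p = g v1 v2 +++ g v2 v3"
  define q where "q = g v1 v5 +++ (g v5 v4 +++ g v4 v3)"
  have arc_p: "arc p"
    unfolding p_def using vs by (intro arc_join edge) (simp_all add: meet Int_insert_left edge)
  have arc_q: "arc q"
    unfolding q_def using vs
    by (intro arc_join edge) (simp_all add: meet Int_insert_left edge path_image_join Int_Un_distrib)
  have img_p: "path_image p = path_image (g v1 v2) \<union> path_image (g v2 v3)"
    unfolding p_def using vs by (auto simp: path_image_join edge)
  have img_q: "path_image q = path_image (g v1 v5) \<union> path_image (g v5 v4) \<union> path_image (g v4 v3)"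
    unfolding q_def using vs by (auto simp: path_image_join edge Un_assoc)
  have ends_pq: "pathstart p = pos v1" "pathfinish p = pos v3" "pathstart q = pos v1" "pathfinish q = pos v3"
    unfolding p_def q_def using vs by (simp_all add: edge)
  interpret theta_crossing "pos v1" "pos v3" p q "g v1 v3" "g v2 v4" "pos v2" "pos v4"
    using vs arc_p arc_q
    by unfold_locales
      (simp_all add: img_p img_q ends_pq edge ends_in_edge_image inj_on_eq_iff[OF inj_pos]
        doubleton_eq_iff meet Int_Un_distrib Int_Un_distrib2 Int_insert_left)
  have "pentagon v1 v2 v3 v4 v5 = path_image p \<union> path_image q"
    unfolding pentagon_def img_p img_q using vs edge_image_commute by (auto simp: Un_ac)
  then show False
    using not_same_side S chords unfolding edge_interior_def by auto
qed

text \<open>Each of the five chords of the pentagon lies inside or outside it, and cyclically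
  consecutive chords in the order \<open>13, 24, 35, 41, 52\<close> cross; five being odd, two
  consecutive ones lie on the same side.\<close>
lemma no_K5:
  assumes dist: "distinct [v1,v2,v3,v4,v5]" and K: "{v1,v2,v3,v4,v5} \<subseteq> K"
  shows False
proof -
  define J where "J = pentagon v1 v2 v3 v4 v5"
  have dist_rev: "distinct [v5,v4,v3,v2,v1]"
    using dist by auto
  have "closed J"
    unfolding J_def pentagon_def using K dist by (intro closed_Un closed_arc_image edge_arc) auto
  have side: "edge_interior x y \<subseteq> inside J \<or> edge_interior x y \<subseteq> outside J"
    if "(x,y) \<in> {(v1,v3), (v2,v4), (v3,v5), (v4,v1), (v5,v2)}" for x y
  proof (rule edge_interior_inside_or_outside[OF _ _ _ \<open>closed J\<close>])
    show "x \<in> K" "y \<in> K" "x \<noteq> y"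
      using that K dist by auto
    show "edge_interior x y \<inter> J = {}"
      using that K dist dist_rev
      by (elim insertE emptyE) (simp_all add: J_def pentagon_def Int_Un_distrib edge_interior_Int doubleton_eq_iff)
  qed
  have crossing: "\<not> (edge_interior a c \<subseteq> S \<and> edge_interior b d \<subseteq> S)"
    if "S = inside J \<or> S = outside J"
      and "(a,b,c,d,e) \<in> {(v1,v2,v3,v4,v5), (v2,v3,v4,v5,v1), (v3,v4,v5,v1,v2),
             (v4,v5,v1,v2,v3), (v5,v1,v2,v3,v4)}"
    for a b c d e S
  proof -
    have "distinct [a,b,c,d,e]" "{a,b,c,d,e} \<subseteq> K" "J = pentagon a b c d e"
      using that(2) dist K unfolding J_def by (auto simp: pentagon_rotate)
    then show ?thesis
      using crossing_chords_not_same_side that(1) by blast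
  qed
  have "\<not> (edge_interior v1 v3 \<subseteq> S \<and> edge_interior v2 v4 \<subseteq> S)"
    and "\<not> (edge_interior v2 v4 \<subseteq> S \<and> edge_interior v3 v5 \<subseteq> S)"
    and "\<not> (edge_interior v3 v5 \<subseteq> S \<and> edge_interior v4 v1 \<subseteq> S)"
    and "\<not> (edge_interior v4 v1 \<subseteq> S \<and> edge_interior v5 v2 \<subseteq> S)"
    and "\<not> (edge_interior v5 v2 \<subseteq> S \<and> edge_interior v1 v3 \<subseteq> S)"
    if "S = inside J \<or> S = outside J" for S
    using crossing[OF that, of v1 v2 v3 v4 v5] crossing[OF that, of v2 v3 v4 v5 v1]
      crossing[OF that, of v3 v4 v5 v1 v2] crossing[OF that, of v4 v5 v1 v2 v3]
      crossing[OF that, of v5 v1 v2 v3 v4]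
    by simp_all
  from this[of "inside J", simplified] this[of "outside J", simplified]
  show False
    using side[of v1 v3, simplified] side[of v2 v4, simplified] side[of v3 v5, simplified]
      side[of v4 v1, simplified] side[of v5 v2, simplified]
    by argo
qed

end

lemma planar_K5_free:
  assumes "simple_graph V E" and "planar V E" and dist: "distinct [v1,v2,v3,v4,v5]"
    and adj: "\<And>x y. x \<in> {v1,v2,v3,v4,v5} \<Longrightarrow> y \<in> {v1,v2,v3,v4,v5} \<Longrightarrow> x \<noteq> y \<Longrightarrow> {x,y} \<in> E"
  shows False
proof -
  obtain pos :: "'a \<Rightarrow> complex" and \<gamma> :: "'a set \<Rightarrow> real \<Rightarrow> complex"
    where inj: "inj_on pos V"
      and arcs: "\<forall>e\<in>E. arc (\<gamma> e) \<and> {pathstart (\<gamma> e), pathfinish (\<gamma> e)} = pos ` e"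
      and meet: "\<forall>e\<in>E. \<forall>e'\<in>E. e \<noteq> e' \<longrightarrow> path_image (\<gamma> e) \<inter> path_image (\<gamma> e') \<subseteq> pos ` (e \<inter> e')"
    using assms(2) unfolding planar_def by (elim exE conjE) blast
  define K where "K = {v1,v2,v3,v4,v5}"
  have "K \<subseteq> V"
  proof
    fix x assume x: "x \<in> K"
    obtain y where "y \<in> K" "y \<noteq> x"
      using dist unfolding K_def by (metis distinct_length_2_or_more insertCI)
    then have "{x,y} \<in> E"
      using adj x unfolding K_def by blast
    then show "x \<in> V"
      using assms(1) unfolding simple_graph_def by (auto simp: doubleton_eq_iff)
  qed
  then have inj_K: "inj_on pos K"
    using inj inj_on_subset by blast
  define g where
    "g x y = (if pathstart (\<gamma> {x,y}) = pos x then \<gamma> {x,y} else reversepath (\<gamma> {x,y}))" for x y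
  have g: "arc (g x y) \<and> pathstart (g x y) = pos x \<and> pathfinish (g x y) = pos y"
    if "x \<in> K" "y \<in> K" "x \<noteq> y" for x y
  proof -
    have "{x,y} \<in> E"
      using adj that unfolding K_def by blast
    then have "arc (\<gamma> {x,y})" "{pathstart (\<gamma> {x,y}), pathfinish (\<gamma> {x,y})} = {pos x, pos y}"
      using arcs by auto
    moreover have "pos x \<noteq> pos y"
      using inj_K that by (auto dest: inj_onD)
    ultimately show ?thesis
      unfolding g_def by (auto simp: doubleton_eq_iff arc_reversepath)
  qed
  have image_g: "path_image (g x y) = path_image (\<gamma> {x,y})" for x y
    by (simp add: g_def)
  interpret complete_graph_drawing K pos g
  proof
    show "inj_on pos K"
      by (fact inj_K)
    show "arc (g x y)" "pathstart (g x y) = pos x" "pathfinish (g x y) = pos y"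
      if "x \<in> K" "y \<in> K" "x \<noteq> y" for x y
      using g[OF that] by simp_all
    show "path_image (g x y) = path_image (g y x)" for x y
      unfolding image_g by (simp add: insert_commute)
    show "path_image (g x y) \<inter> path_image (g u v) \<subseteq> pos ` ({x,y} \<inter> {u,v})"
      if "x \<in> K" "y \<in> K" "u \<in> K" "v \<in> K" "x \<noteq> y" "u \<noteq> v" "{x,y} \<noteq> {u,v}" for x y u v
      using meet adj that unfolding image_g K_def by simp
  qed
  show False
    by (rule no_K5[OF dist]) (simp add: K_def)
qed


lemma cycle_edges_conv_image:
  "cycle_edges xs = (\<lambda>i. {xs ! i, xs ! ((i + 1) mod length xs)}) ` {..<length xs}"
  unfolding cycle_edges_def by auto

lemma simple_cycle_iff_edges_subset:
  "simple_cycle E xs \<longleftrightarrow> length xs > 2 \<and> distinct xs \<and> cycle_edges xs \<subseteq> E"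
  unfolding simple_cycle_def cycle_edges_def by auto

lemmas simple_cycle_explicit = simple_cycle_iff_edges_subset cycle_edges_conv_image lessThan_Suc

lemma cycle_edges_conv_range:
  assumes "xs \<noteq> []"
  shows "cycle_edges xs = range (\<lambda>i. {xs ! (i mod length xs), xs ! (Suc i mod length xs)})"
    (is "_ = range ?f")
proof -
  have "cycle_edges xs = ?f ` {..<length xs}"
    unfolding cycle_edges_conv_image by (intro image_cong) auto
  also have "\<dots> = range ?f"
  proof
    show "range ?f \<subseteq> ?f ` {..<length xs}"
    proof (rule image_subsetI)
      fix i
      have "?f i = ?f (i mod length xs)"
        by (simp add: mod_Suc_eq)
      then show "?f i \<in> ?f ` {..<length xs}"
        using assms by simp
    qed
  qed blast
  finally show ?thesis .
qed

lemma nth_rotate_mod: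
  assumes "xs \<noteq> []"
  shows "rotate n xs ! (i mod length xs) = xs ! ((i + n) mod length xs)"
proof -
  have "(n + i mod length xs) mod length xs = (i + n) mod length xs"
    by (simp add: mod_add_right_eq add.commute)
  then show ?thesis
    using assms by (simp add: nth_rotate)
qed

lemma cycle_edges_rotate: "cycle_edges (rotate n xs) = cycle_edges xs"
proof (cases "xs = []")
  case False
  let ?L = "length xs"
  define f where "f i = {xs ! (i mod ?L), xs ! (Suc i mod ?L)}" for i
  have "cycle_edges (rotate n xs) = range (\<lambda>i. f (i + n))"
    using False by (simp add: cycle_edges_conv_range nth_rotate_mod f_def)
  also have "\<dots> = range f"
  proof (intro equalityI subsetI)
    fix e assume "e \<in> range f"
    then obtain j where "e = f j" by blast
    moreover have "(j + ?L * n - n) + n = j + ?L * n"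
      using False by (cases ?L) auto
    then have "f j = f ((j + ?L * n - n) + n)"
      by (simp add: f_def mod_Suc_eq)
    ultimately show "e \<in> range (\<lambda>i. f (i + n))" by blast
  qed auto
  finally show ?thesis
    using False by (simp add: cycle_edges_conv_range f_def)
qed simp

lemma simple_cycle_rotate: "simple_cycle E (rotate n xs) \<longleftrightarrow> simple_cycle E xs"
  by (simp add: simple_cycle_iff_edges_subset cycle_edges_rotate)

lemma simple_cycle_rotate_edge_to_front:
  assumes "simple_cycle E C" and "e \<in> cycle_edges C"
  obtains C' where "simple_cycle E C'" "cycle_edges C' = cycle_edges C" "length C' = length C"
    "e = {C' ! 0, C' ! 1}"
proof -
  obtain i where i: "i < length C" "e = {C ! i, C ! ((i + 1) mod length C)}"
    using assms(2) unfolding cycle_edges_def by auto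
  have "length C > 2"
    using assms(1) unfolding simple_cycle_def by simp
  then have "C \<noteq> []" "1 < length C"
    by auto
  then have "rotate i C ! 0 = C ! i" "rotate i C ! 1 = C ! ((i + 1) mod length C)"
    using nth_rotate[of 0 C i] nth_rotate[of 1 C i] i(1) by (simp_all add: add.commute)
  then show ?thesis
    using that[of "rotate i C"] assms(1) i(2) by (simp add: simple_cycle_rotate cycle_edges_rotate)
qed

lemma even_cycle_complete_if_not_removable:
  assumes C: "simple_cycle E C" and "\<not> removable E C" and "even (length C)"
    and uv: "u \<in> set C" "v \<in> set C" "u \<noteq> v"
  shows "{u,v} \<in> E"
proof -
  have "is_complete_graph (set C) (induced_edges E (set C))
      \<or> is_odd_cycle_graph (set C) (induced_edges E (set C))"
    using assms(1,2) unfolding removable_def by blast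
  then show ?thesis
  proof
    assume "is_odd_cycle_graph (set C) (induced_edges E (set C))"
    then obtain n :: nat and f where "odd n" "bij_betw f (set C) {0..<n}"
      unfolding is_odd_cycle_graph_def graph_iso_def by blast
    moreover have "distinct C"
      using C unfolding simple_cycle_def by simp
    ultimately show ?thesis
      using bij_betw_same_card distinct_card assms(3) by fastforce
  next
    assume "is_complete_graph (set C) (induced_edges E (set C))"
    then obtain n :: nat and f where bij: "bij_betw f (set C) {0..<n}"
      and iso: "\<forall>x\<in>set C. \<forall>y\<in>set C. {x,y} \<in> induced_edges E (set C) \<longleftrightarrow> {f x, f y} \<in> complete_graph_edges n"
      unfolding is_complete_graph_def graph_iso_def by blast
    have "f u \<noteq> f v" "f u < n" "f v < n"
      using bij uv unfolding bij_betw_def by (auto dest: inj_onD)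
    then have "{f u, f v} \<in> complete_graph_edges n"
      unfolding complete_graph_edges_def by blast
    then show ?thesis
      using iso uv unfolding induced_edges_def by blast
  qed
qed

locale K5_free_even_cycles_complete =
  fixes E :: "'a set set"
  assumes even_cycle_complete: "\<And>C u v. simple_cycle E C \<Longrightarrow> length C \<le> 10 \<Longrightarrow> even (length C) \<Longrightarrow>
      u \<in> set C \<Longrightarrow> v \<in> set C \<Longrightarrow> u \<noteq> v \<Longrightarrow> {u,v} \<in> E"
    and K5_free: "\<And>a b c d e. distinct [a,b,c,d,e] \<Longrightarrow>
      (\<And>x y. x \<in> {a,b,c,d,e} \<Longrightarrow> y \<in> {a,b,c,d,e} \<Longrightarrow> x \<noteq> y \<Longrightarrow> {x,y} \<in> E) \<Longrightarrow> False"
begin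

lemma square_diagonal:
  assumes "distinct [a,b,c,d]" "{a,b} \<in> E" "{b,c} \<in> E" "{c,d} \<in> E" "{d,a} \<in> E"
  shows "{a,c} \<in> E"
proof (rule even_cycle_complete)
  show "simple_cycle E [a,b,c,d]"
    using assms by (simp add: simple_cycle_explicit)
qed (use assms(1) in simp_all)

lemma long_even_cycle_impossible:
  assumes "simple_cycle E C" "6 \<le> length C" "length C \<le> 10" "even (length C)"
  shows False
proof -
  obtain a b c d e C' where C: "C = a # b # c # d # e # C'"
    using assms(2) by (auto simp: numeral_eq_Suc Suc_le_length_iff)
  have "distinct [a,b,c,d,e]"
    using assms(1) unfolding C simple_cycle_def by auto
  then show False
  proof (rule K5_free)
    fix x y assume "x \<in> {a,b,c,d,e}" "y \<in> {a,b,c,d,e}" "x \<noteq> y"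
    then show "{x,y} \<in> E"
      using even_cycle_complete[OF assms(1,3,4)] unfolding C by auto
  qed
qed

lemma no_hexagon:
  assumes "distinct [a,b,c,d,e,f]" "{a,b} \<in> E" "{b,c} \<in> E" "{c,d} \<in> E" "{d,e} \<in> E"
    "{e,f} \<in> E" "{f,a} \<in> E"
  shows False
  by (rule long_even_cycle_impossible[of "[a,b,c,d,e,f]"]) (use assms in \<open>simp_all add: simple_cycle_explicit\<close>)

lemma no_octagon:
  assumes "distinct [a,b,c,d,e,f,g,h]" "{a,b} \<in> E" "{b,c} \<in> E" "{c,d} \<in> E" "{d,e} \<in> E"
    "{e,f} \<in> E" "{f,g} \<in> E" "{g,h} \<in> E" "{h,a} \<in> E"
  shows False
  by (rule long_even_cycle_impossible[of "[a,b,c,d,e,f,g,h]"]) (use assms in \<open>simp_all add: simple_cycle_explicit\<close>)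

lemma pentagon_chordless:
  assumes dist: "distinct [a,b,c,d,e]"
    and edges: "{a,b} \<in> E" "{b,c} \<in> E" "{c,d} \<in> E" "{d,e} \<in> E" "{e,a} \<in> E"
    and chord: "{a,c} \<in> E"
  shows False
proof -
  have ad: "{a,d} \<in> E"
    using square_diagonal[OF _ chord edges(3,4,5)] dist by simp
  have ce: "{c,e} \<in> E"
    using square_diagonal[OF _ edges(3,4,5) chord] dist by auto
  have bd: "{b,d} \<in> E"
    using square_diagonal[of b c d a] dist edges ad by (auto simp: insert_commute)
  have be: "{b,e} \<in> E"
    using square_diagonal[OF _ edges(2) ce edges(5,1)] dist by auto
  show False
    by (rule K5_free[OF dist])
      (use edges chord ad ce bd be in \<open>auto simp: insert_commute\<close>)
qed

lemma pentagon_triangle_share_no_edge: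
  assumes pentagon: "distinct [u,v,p,q,r]" "{u,v} \<in> E" "{v,p} \<in> E" "{p,q} \<in> E" "{q,r} \<in> E" "{r,u} \<in> E"
    and triangle: "distinct [u,v,w]" "{v,w} \<in> E" "{w,u} \<in> E"
  shows False
proof -
  have "{u,p} \<notin> E" "{v,q} \<notin> E" "{r,v} \<notin> E"
    using pentagon_chordless[of u v p q r] pentagon_chordless[of v p q r u]
      pentagon_chordless[of r u v p q] pentagon by auto
  then have "w \<notin> {u,v,p,q,r}"
    using triangle by (auto simp: insert_commute)
  then show False
    using no_hexagon[of u w v p q r] pentagon triangle by (auto simp: insert_commute)
qed

lemma pentagon_square_share_no_edge:
  assumes pentagon: "distinct [u,v,p,q,r]" "{u,v} \<in> E" "{v,p} \<in> E" "{p,q} \<in> E" "{q,r} \<in> E" "{r,u} \<in> E"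
    and square: "distinct [u,v,w,z]" "{v,w} \<in> E" "{w,z} \<in> E" "{z,u} \<in> E"
  shows False
proof -
  have "{u,w} \<in> E"
    using square_diagonal[of u v w z] pentagon square by simp
  then show False
    using pentagon_triangle_share_no_edge[OF pentagon, of w] square by (auto simp: insert_commute)
qed

lemma pentagons_share_path:
  assumes pentagon: "distinct [u,v,p,q,r]" "{u,v} \<in> E" "{v,p} \<in> E" "{p,q} \<in> E" "{q,r} \<in> E" "{r,u} \<in> E"
    and other: "distinct [u,v,p,x,y]" "{p,x} \<in> E" "{x,y} \<in> E" "{y,u} \<in> E"
  shows "x = q \<and> y = r"
proof -
  have no_chords: "{u,p} \<notin> E" "{q,u} \<notin> E" "{p,r} \<notin> E"
    using pentagon_chordless[of u v p q r] pentagon_chordless[of q r u v p]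
      pentagon_chordless[of p q r u v] pentagon by auto
  show ?thesis
  proof (cases "y = r")
    case True
    have "x = q"
    proof (rule ccontr)
      assume "x \<noteq> q"
      then have "{p,r} \<in> E"
        using square_diagonal[of p q r x] pentagon other True by (auto simp: insert_commute)
      then show False
        using no_chords by simp
    qed
    then show ?thesis
      using True by simp
  next
    case False
    then have y_new: "y \<notin> {u,v,p,q,r}"
      using no_chords other by (auto simp: insert_commute)
    consider "x = q" | "x = r" | "x \<notin> {u,v,p,q,r}"
      using other by auto
    then show ?thesis
    proof cases
      case 1
      then have "{u,q} \<in> E"
        using square_diagonal[of u y q r] pentagon other y_new by (auto simp: insert_commute)
      then show ?thesis
        using no_chords by (simp add: insert_commute)
    next
      case 2
      then show ?thesis
        using no_chords other by simp
    next
      case 3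
      then show ?thesis
        using no_hexagon[of u r q p x y] pentagon other y_new by (auto simp: insert_commute)
    qed
  qed
qed

lemma pentagons_share_edge:
  assumes pentagon: "distinct [u,v,p,q,r]" "{u,v} \<in> E" "{v,p} \<in> E" "{p,q} \<in> E" "{q,r} \<in> E" "{r,u} \<in> E"
    and other: "distinct [u,v,w,x,y]" "{v,w} \<in> E" "{w,x} \<in> E" "{x,y} \<in> E" "{y,u} \<in> E"
  shows "w = p \<and> x = q \<and> y = r"
proof -
  have no_chords: "{v,q} \<notin> E" "{r,v} \<notin> E" "{u,p} \<notin> E" "{q,u} \<notin> E"
    using pentagon_chordless[of v p q r u] pentagon_chordless[of r u v p q]
      pentagon_chordless[of u v p q r] pentagon_chordless[of q r u v p] pentagon by auto
  have "w \<noteq> q" "w \<noteq> r" "y \<noteq> p" "y \<noteq> q"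
    using no_chords other by (metis insert_commute)+
  then consider "w = p" | "y = r" | "w \<notin> {u,v,p,q,r}" "y \<notin> {u,v,p,q,r}"
    using other by auto
  then show ?thesis
  proof cases
    case 1
    then show ?thesis
      using pentagons_share_path[OF pentagon, of x y] other by simp
  next
    case 2
    have "distinct [v,u,r,q,p]" "{v,u} \<in> E" "{u,r} \<in> E" "{r,q} \<in> E" "{q,p} \<in> E" "{p,v} \<in> E"
      using pentagon by (auto simp: insert_commute)
    from pentagons_share_path[OF this, of x w] show ?thesis
      using other 2 by (auto simp: insert_commute)
  next
    case 3
    consider "x = p" | "x = q" | "x = r" | "x \<notin> {u,v,p,q,r}"
      using other by auto
    then show ?thesis
    proof cases
      case 1
      then show ?thesis
        using no_hexagon[of v w p q r u] pentagon other 3 by (auto simp: insert_commute)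
    next
      case 2
      then have "{v,q} \<in> E"
        using square_diagonal[of v w q p] pentagon other 3 by (auto simp: insert_commute)
      then show ?thesis
        using no_chords by simp
    next
      case 3
      then show ?thesis
        using no_hexagon[of u y r q p v] pentagon other \<open>y \<notin> {u,v,p,q,r}\<close> by (auto simp: insert_commute)
    next
      case 4
      then show ?thesis
        using no_octagon[of u y x w v p q r] pentagon other 3 by (auto simp: insert_commute)
    qed
  qed
qed

lemma pentagon_short_cycle_share_edge:
  assumes pentagon: "simple_cycle E [u,v,p,q,r]"
    and D: "simple_cycle E D" "length D \<le> 5" "D ! 0 = u" "D ! 1 = v"
  shows "cycle_edges D = cycle_edges [u,v,p,q,r]"
proof -
  have P: "distinct [u,v,p,q,r]" "{u,v} \<in> E" "{v,p} \<in> E" "{p,q} \<in> E" "{q,r} \<in> E" "{r,u} \<in> E"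
    using pentagon by (simp_all add: simple_cycle_explicit)
  have "length D > 2"
    using D(1) unfolding simple_cycle_def by simp
  then consider "length D = 3" | "length D = 4" | "length D = 5"
    using D(2) by linarith
  then show ?thesis
  proof cases
    case 1
    then obtain w where "D = [u,v,w]"
      using D(3,4) by (auto simp: numeral_eq_Suc length_Suc_conv)
    then show ?thesis
      using pentagon_triangle_share_no_edge[OF P, of w] D(1) by (simp add: simple_cycle_explicit)
  next
    case 2
    then obtain w z where "D = [u,v,w,z]"
      using D(3,4) by (auto simp: numeral_eq_Suc length_Suc_conv)
    then show ?thesis
      using pentagon_square_share_no_edge[OF P, of w z] D(1) by (simp add: simple_cycle_explicit)
  next
    case 3
    then obtain w x y where D_eq: "D = [u,v,w,x,y]"
      using D(3,4) by (auto simp: numeral_eq_Suc length_Suc_conv)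
    then have "w = p \<and> x = q \<and> y = r"
      using pentagons_share_edge[OF P, of w x y] D(1) by (simp add: simple_cycle_explicit)
    then show ?thesis
      using D_eq by simp
  qed
qed

lemma pentagon_short_cycle_edge_disjoint:
  assumes C1: "simple_cycle E C1" "length C1 = 5"
    and C2: "simple_cycle E C2" "length C2 \<le> 5"
    and different: "cycle_edges C1 \<noteq> cycle_edges C2"
  shows "cycle_edges C1 \<inter> cycle_edges C2 = {}"
proof (rule ccontr)
  assume "cycle_edges C1 \<inter> cycle_edges C2 \<noteq> {}"
  then obtain e where e: "e \<in> cycle_edges C1" "e \<in> cycle_edges C2"
    by blast
  obtain D1 where D1: "simple_cycle E D1" "cycle_edges D1 = cycle_edges C1" "length D1 = 5"
      "e = {D1 ! 0, D1 ! 1}"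
    using simple_cycle_rotate_edge_to_front[OF C1(1) e(1)] C1(2) by metis
  obtain D2 where D2: "simple_cycle E D2" "cycle_edges D2 = cycle_edges C2" "length D2 \<le> 5"
      "e = {D2 ! 0, D2 ! 1}"
    using simple_cycle_rotate_edge_to_front[OF C2(1) e(2)] C2(2) by metis
  obtain u v p q r where D1_eq: "D1 = [u,v,p,q,r]"
    using D1(3) by (auto simp: numeral_eq_Suc length_Suc_conv)
  have "D2 ! 0 = u \<and> D2 ! 1 = v \<or> D2 ! 0 = v \<and> D2 ! 1 = u"
    using D1(4) D2(4) D1_eq by (auto simp: doubleton_eq_iff)
  moreover have "simple_cycle E [v,u,r,q,p]" "cycle_edges [v,u,r,q,p] = cycle_edges D1"
    using D1(1) unfolding D1_eq by (auto simp: simple_cycle_explicit insert_commute)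
  ultimately have "cycle_edges D2 = cycle_edges D1"
    using pentagon_short_cycle_share_edge[OF D1(1)[unfolded D1_eq] D2(1,3)]
      pentagon_short_cycle_share_edge[of v u r q p D2] D2(1,3) D1_eq by auto
  then show False
    using different D1(2) D2(2) by simp
qed

end

lemma K5_free_even_cycles_complete_if_no_removable:
  assumes "simple_graph V E" and "planar V E"
    and "\<forall>C. simple_cycle E C \<and> length C \<le> 10 \<longrightarrow> \<not> removable E C"
  shows "K5_free_even_cycles_complete E"
proof
  show "{u,v} \<in> E" if "simple_cycle E C" "length C \<le> 10" "even (length C)"
    "u \<in> set C" "v \<in> set C" "u \<noteq> v" for C u v
    using even_cycle_complete_if_not_removable[OF that(1) _ that(3-6)] that(1,2) assms(3) by blast
next
  show False if "distinct [a,b,c,d,e]"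
    "\<And>x y. x \<in> {a,b,c,d,e} \<Longrightarrow> y \<in> {a,b,c,d,e} \<Longrightarrow> x \<noteq> y \<Longrightarrow> {x,y} \<in> E" for a b c d e
    by (rule planar_K5_free[OF assms(1,2) that])
qed

theorem lemma5p3:
  fixes V :: "'a set" and E :: "'a set set" and C1 C2 :: "'a list"
  assumes "simple_graph V E"
    and "planar V E"
    and "simple_cycle E C1" and "simple_cycle E C2"
    and "cycle_edges C1 \<noteq> cycle_edges C2"
    and "(length C1 = 5 \<and> length C2 \<le> 5) \<or> (length C2 = 5 \<and> length C1 \<le> 5)"
    and "\<forall>C. simple_cycle E C \<and> length C \<le> 10 \<longrightarrow> \<not> removable E C"
  shows "cycle_edges C1 \<inter> cycle_edges C2 = {}"
proof -
  interpret K5_free_even_cycles_complete E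
    using K5_free_even_cycles_complete_if_no_removable[OF assms(1,2,7)] .
  show ?thesis
    using assms(6)
  proof
    assume "length C1 = 5 \<and> length C2 \<le> 5"
    then show ?thesis
      using pentagon_short_cycle_edge_disjoint[of C1 C2] assms(3-5) by simp
  next
    assume "length C2 = 5 \<and> length C1 \<le> 5"
    then show ?thesis
      using pentagon_short_cycle_edge_disjoint[of C2 C1] assms(3-5) by (simp add: Int_commute eq_commute)
  qed
qed

end
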